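(* Let $h\ge2$ be an integer and $a,b,c,d\in\{1,\dots,h-1\}$ integers, and let $Q=\operatorname{conv}\{(a,0),(0,b),(h,h-c),(h-d,h)\}$. Then $\operatorname{ls}_\square(Q)=h$. Moreover, $Q$ is minimal if and only if $$\min\{a,b\}+\min\{c,d\}>h\quad\text{or}\quad \max\{a,c\}+\max\{b,d\}<h.$$ Furthermore, $Q$ cannot satisfy both of these inequalities, and if $Q$ satisfies one of them, then $Q$ is lattice-equivalent to a quadrilateral of the same form (with parameters in $\{1,\dots,h-1\}$) that satisfies the other.
   Context: A lattice polygon is a convex polygon (possibly degenerate) all of whose vertices lie in $\mathbb Z^2$. An affine unimodular transformation is $x\mapsto Ax+v$ with $A\in\mathbb Z^{2\times2}$, $\det A=\pm1$, $v\in\mathbb Z^2$; two sets are lattice-equivalent if one is the image of the other under such a map. With $\square=[0,1]^2$, $\operatorname{ls}_\square(P)$ is the smallest $l\ge0$ such that $\varphi(P)\subseteq l\square$ for some affine unimodular $\varphi$. A lattice polygon $P$ with $\operatorname{ls}_\square(P)=h$ is minimal if no lattice polygon properly contained in $P$ has $\operatorname{ls}_\square$ equal to $h$. *)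

theory Defs
  imports "HOL-Analysis.Analysis"
begin

definition lattice_point :: "real \<times> real \<Rightarrow> bool" where
  "lattice_point p \<longleftrightarrow> fst p \<in> \<int> \<and> snd p \<in> \<int>"

text \<open>Lattice polygon: convex hull of a finite nonempty set of lattice points (possibly degenerate).\<close>
definition lattice_polygon :: "(real \<times> real) set \<Rightarrow> bool" where
  "lattice_polygon P \<longleftrightarrow>
     (\<exists>V. finite V \<and> V \<noteq> {} \<and> (\<forall>v\<in>V. lattice_point v) \<and> P = convex hull V)"

definition unimodular_affine :: "(real \<times> real \<Rightarrow> real \<times> real) \<Rightarrow> bool" where
  "unimodular_affine f \<longleftrightarrow>
     (\<exists>a11 a12 a21 a22 v1 v2 :: int.
        (a11 * a22 - a12 * a21 = 1 \<or> a11 * a22 - a12 * a21 = -1) \<and>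
        f = (\<lambda>(x, y). (of_int a11 * x + of_int a12 * y + of_int v1,
                       of_int a21 * x + of_int a22 * y + of_int v2)))"

definition lattice_equivalent :: "(real \<times> real) set \<Rightarrow> (real \<times> real) set \<Rightarrow> bool" where
  "lattice_equivalent A B \<longleftrightarrow> (\<exists>f. unimodular_affine f \<and> f ` A = B)"

definition unit_square :: "(real \<times> real) set" where
  "unit_square = {p. 0 \<le> fst p \<and> fst p \<le> 1 \<and> 0 \<le> snd p \<and> snd p \<le> 1}"

definition ls_square :: "(real \<times> real) set \<Rightarrow> real" where
  "ls_square P = Inf {l. 0 \<le> l \<and> (\<exists>f. unimodular_affine f \<and> f ` P \<subseteq> (\<lambda>p. l *\<^sub>R p) ` unit_square)}"

definition minimal_polygon :: "(real \<times> real) set \<Rightarrow> bool" where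
  "minimal_polygon P \<longleftrightarrow> lattice_polygon P \<and>
     \<not> (\<exists>P'. lattice_polygon P' \<and> P' \<subset> P \<and> ls_square P' = ls_square P)"

definition quadQ :: "int \<Rightarrow> int \<Rightarrow> int \<Rightarrow> int \<Rightarrow> int \<Rightarrow> (real \<times> real) set" where
  "quadQ h a b c d = convex hull {(of_int a, 0), (0, of_int b),
                                  (of_int h, of_int (h - c)), (of_int (h - d), of_int h)}"

definition condA :: "int \<Rightarrow> int \<Rightarrow> int \<Rightarrow> int \<Rightarrow> int \<Rightarrow> bool" where
  "condA h a b c d \<longleftrightarrow> min a b + min c d > h"

definition condB :: "int \<Rightarrow> int \<Rightarrow> int \<Rightarrow> int \<Rightarrow> int \<Rightarrow> bool" where
  "condB h a b c d \<longleftrightarrow> max a c + max b d < h"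

end

theory Submission
  imports Defs
begin

text \<open>
  \<open>Q\<close> lies in \<open>[0, h]\<^sup>2\<close>, and the lattice vectors \<open>(h, h - b - c)\<close> and \<open>(h - a - d, h)\<close> joining
  opposite vertices show that no unimodular image of \<open>Q\<close> fits into a smaller square: a row \<open>(p, q)\<close> of a
  unimodular matrix pairs one of them to absolute value \<open>\<ge> h\<close> unless \<open>|p| = |q|\<close>, and two such rows
  have even determinant. When one of the two vectors is shortened to height \<open>h - 1\<close>, the same argument
  still works provided both diagonal widths (in the directions \<open>x + y\<close> and \<open>x - y\<close>) are at least \<open>h\<close>.

  If one of the two inequalities holds, a diagonal width of \<open>Q\<close> is at most \<open>h - 1\<close>; a proper lattice
  subpolygon misses a vertex and hence loses a unit of width along one axis, so it fits into a square of
  side \<open>h - 1\<close>. If neither holds, then up to the symmetries \<open>(x, y) \<mapsto> (y, x)\<close> and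
  \<open>(x, y) \<mapsto> (x, h - y)\<close> of the family, the vertex \<open>(a, 0)\<close> can be raised to \<open>(a, 1)\<close> keeping both
  diagonal widths at least \<open>h\<close>, which gives a proper subpolygon with the same \<open>ls\<close>. The reflection
  exchanges the two inequalities.
\<close>

section \<open>Half-planes and convex hulls\<close>

lemma convex_hull_halfplane:
  fixes V :: "(real \<times> real) set"
  assumes "\<forall>v\<in>V. \<alpha> * fst v + \<beta> * snd v \<le> k" and "p \<in> convex hull V"
  shows "\<alpha> * fst p + \<beta> * snd p \<le> k"
proof -
  have "convex hull V \<subseteq> {p. inner (\<alpha>, \<beta>) p \<le> k}"
    using assms(1) by (intro hull_minimal convex_halfspace_le) (auto simp: inner_prod_def)
  then show ?thesis
    using assms(2) by (auto simp: inner_prod_def)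
qed

lemma convex_hull_halfplane_strict:
  fixes V :: "(real \<times> real) set"
  assumes "finite V" "V \<noteq> {}" "\<forall>v\<in>V. k < \<alpha> * fst v + \<beta> * snd v" "p \<in> convex hull V"
  shows "k < \<alpha> * fst p + \<beta> * snd p"
proof -
  define m where "m = Min ((\<lambda>v. \<alpha> * fst v + \<beta> * snd v) ` V)"
  have "k < m"
    using assms(1-3) unfolding m_def by (subst Min_gr_iff) auto
  have "\<forall>v\<in>V. (- \<alpha>) * fst v + (- \<beta>) * snd v \<le> - m"
  proof
    fix v assume "v \<in> V"
    then have "m \<le> \<alpha> * fst v + \<beta> * snd v"
      unfolding m_def using assms(1) by (intro Min_le) auto
    then show "(- \<alpha>) * fst v + (- \<beta>) * snd v \<le> - m"
      by simp
  qed
  from convex_hull_halfplane[OF this assms(4)] \<open>k < m\<close> show ?thesis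
    by linarith
qed

lemma convex_hull_halfplane_boundary:
  fixes V :: "(real \<times> real) set"
  assumes "finite V" "v \<in> V" "\<alpha> * fst v + \<beta> * snd v = k"
    and "\<forall>w\<in>V - {v}. k < \<alpha> * fst w + \<beta> * snd w"
    and "p \<in> convex hull V" "\<alpha> * fst p + \<beta> * snd p \<le> k"
  shows "p = v"
proof (cases "V - {v} = {}")
  case True
  then have "V = {v}"
    using assms(2) by blast
  then show ?thesis
    using assms(5) by simp
next
  case False
  have "p \<in> convex hull (insert v (V - {v}))"
    using assms(2,5) by (simp add: insert_absorb)
  then obtain u t q where ut: "0 \<le> u" "0 \<le> t" "u + t = 1" and q: "q \<in> convex hull (V - {v})"
    and p: "p = u *\<^sub>R v + t *\<^sub>R q"
    unfolding convex_hull_insert[OF False] by blast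
  define lq where "lq = \<alpha> * fst q + \<beta> * snd q"
  have "finite (V - {v})"
    using assms(1) by simp
  then have "k < lq"
    unfolding lq_def using False assms(4) q by (rule convex_hull_halfplane_strict)
  have "\<alpha> * fst p + \<beta> * snd p = u * (\<alpha> * fst v + \<beta> * snd v) + t * lq"
    using p unfolding lq_def by (simp add: algebra_simps)
  also have "\<dots> = k + t * (lq - k)"
    unfolding assms(3) eq_diff_eq[THEN iffD2, OF ut(3)] by (simp add: algebra_simps)
  finally have "t * (lq - k) \<le> 0"
    using assms(6) by linarith
  moreover have "0 < lq - k"
    using \<open>k < lq\<close> by simp
  ultimately have "t = 0"
    using ut(2) by (meson mult_pos_pos not_le order.order_iff_strict)
  then show ?thesis
    using p ut by simp
qed

lemma lattice_point_halfplane_above_vertex: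
  fixes \<alpha> \<beta> k :: int
  assumes "finite V" "v \<in> V" "of_int \<alpha> * fst v + of_int \<beta> * snd v = of_int k"
    and "\<forall>w\<in>V - {v}. of_int k < of_int \<alpha> * fst w + of_int \<beta> * snd w"
    and "p \<in> convex hull V" "lattice_point p" "p \<noteq> v"
  shows "of_int k + 1 \<le> of_int \<alpha> * fst p + of_int \<beta> * snd p"
proof -
  obtain x y :: int where xy: "fst p = of_int x" "snd p = of_int y"
    using assms(6) unfolding lattice_point_def by (auto elim!: Ints_cases)
  have "\<not> of_int \<alpha> * fst p + of_int \<beta> * snd p \<le> (of_int k :: real)"
    using convex_hull_halfplane_boundary[OF assms(1-5)] assms(7) by blast
  then have "\<not> real_of_int (\<alpha> * x + \<beta> * y) \<le> of_int k"
    unfolding xy by simp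
  then have "real_of_int (k + 1) \<le> of_int (\<alpha> * x + \<beta> * y)"
    by (subst of_int_le_iff) linarith
  then show ?thesis
    unfolding xy by simp
qed

lemma lattice_polygon_halfplane_above_vertex:
  fixes \<alpha> \<beta> k :: int
  assumes "finite V" "v \<in> V" "of_int \<alpha> * fst v + of_int \<beta> * snd v = of_int k"
    and "\<forall>w\<in>V - {v}. of_int k < of_int \<alpha> * fst w + of_int \<beta> * snd w"
    and "lattice_polygon P" "P \<subseteq> convex hull V" "v \<notin> P" "p \<in> P"
  shows "of_int k + 1 \<le> of_int \<alpha> * fst p + of_int \<beta> * snd p"
proof -
  obtain W where W: "\<forall>w\<in>W. lattice_point w" "P = convex hull W"
    using assms(5) unfolding lattice_polygon_def by blast
  have "W \<subseteq> P"
    unfolding W(2) by (rule hull_subset)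
  have "\<forall>w\<in>W. (- of_int \<alpha>) * fst w + (- of_int \<beta>) * snd w \<le> - (of_int k + 1)"
  proof
    fix w assume "w \<in> W"
    then have "w \<in> convex hull V" "lattice_point w" "w \<noteq> v"
      using \<open>W \<subseteq> P\<close> assms(6,7) W(1) by auto
    from lattice_point_halfplane_above_vertex[OF assms(1-4) this]
    show "(- of_int \<alpha>) * fst w + (- of_int \<beta>) * snd w \<le> - (of_int k + 1)"
      by simp
  qed
  from convex_hull_halfplane[OF this] assms(8) W(2) show ?thesis
    by fastforce
qed

section \<open>Unimodular affine maps\<close>

lemma unimodular_affineI:
  fixes a b c d s t :: int
  assumes "\<bar>a * d - b * c\<bar> = 1"
    and "\<And>x y. f (x, y) = (of_int a * x + of_int b * y + of_int s, of_int c * x + of_int d * y + of_int t)"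
  shows "unimodular_affine f"
  unfolding unimodular_affine_def
  by (rule exI[of _ a], rule exI[of _ b], rule exI[of _ c], rule exI[of _ d],
      rule exI[of _ s], rule exI[of _ t]) (use assms in \<open>auto simp: abs_eq_iff fun_eq_iff\<close>)

lemma unimodular_affineE:
  assumes "unimodular_affine f"
  obtains a b c d s t :: int where "\<bar>a * d - b * c\<bar> = 1"
    and "\<And>x y. f (x, y) = (of_int a * x + of_int b * y + of_int s, of_int c * x + of_int d * y + of_int t)"
proof -
  obtain a b c d s t :: int where
    "a * d - b * c = 1 \<or> a * d - b * c = -1"
    "f = (\<lambda>(x, y). (of_int a * x + of_int b * y + of_int s, of_int c * x + of_int d * y + of_int t))"
    using assms unfolding unimodular_affine_def by blast
  then show ?thesis
    by (intro that) auto
qed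

lemma unimodular_affine_comp:
  assumes "unimodular_affine f" "unimodular_affine g"
  shows "unimodular_affine (g \<circ> f)"
proof -
  obtain a11 a12 a21 a22 v1 v2 :: int where a: "\<bar>a11 * a22 - a12 * a21\<bar> = 1"
    and f: "\<And>x y. f (x, y) = (of_int a11 * x + of_int a12 * y + of_int v1,
                             of_int a21 * x + of_int a22 * y + of_int v2)"
    using assms(1) by (elim unimodular_affineE) blast
  obtain b11 b12 b21 b22 w1 w2 :: int where b: "\<bar>b11 * b22 - b12 * b21\<bar> = 1"
    and g: "\<And>x y. g (x, y) = (of_int b11 * x + of_int b12 * y + of_int w1,
                             of_int b21 * x + of_int b22 * y + of_int w2)"
    using assms(2) by (elim unimodular_affineE) blast
  have "(b11 * a11 + b12 * a21) * (b21 * a12 + b22 * a22) - (b11 * a12 + b12 * a22) * (b21 * a11 + b22 * a21)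
      = (b11 * b22 - b12 * b21) * (a11 * a22 - a12 * a21)"
    by (simp add: algebra_simps)
  then have det: "\<bar>(b11 * a11 + b12 * a21) * (b21 * a12 + b22 * a22) - (b11 * a12 + b12 * a22) * (b21 * a11 + b22 * a21)\<bar> = 1"
    using a b by (simp add: abs_mult)
  have "(g \<circ> f) (x, y) =
      (of_int (b11 * a11 + b12 * a21) * x + of_int (b11 * a12 + b12 * a22) * y + of_int (b11 * v1 + b12 * v2 + w1),
       of_int (b21 * a11 + b22 * a21) * x + of_int (b21 * a12 + b22 * a22) * y + of_int (b21 * v1 + b22 * v2 + w2))"
    for x y
    by (simp add: f g algebra_simps)
  then show ?thesis
    by (rule unimodular_affineI[OF det])
qed

lemma unimodular_affine_inverse:
  assumes "unimodular_affine f"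
  obtains g where "unimodular_affine g" "\<And>p. g (f p) = p" "\<And>q. f (g q) = q"
proof -
  obtain a11 a12 a21 a22 v1 v2 :: int where det: "\<bar>a11 * a22 - a12 * a21\<bar> = 1"
    and f: "\<And>x y. f (x, y) = (of_int a11 * x + of_int a12 * y + of_int v1,
                             of_int a21 * x + of_int a22 * y + of_int v2)"
    using assms by (elim unimodular_affineE) blast
  define \<delta> where "\<delta> = a11 * a22 - a12 * a21"
  \<comment> \<open>the inverse matrix is \<delta> times the adjugate\<close>
  define g :: "real \<times> real \<Rightarrow> real \<times> real" where "g = (\<lambda>(x, y).
    (of_int (\<delta> * a22) * x + of_int (- \<delta> * a12) * y + of_int (- \<delta> * (a22 * v1 - a12 * v2)),
     of_int (- \<delta> * a21) * x + of_int (\<delta> * a11) * y + of_int (- \<delta> * (a11 * v2 - a21 * v1))))"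
  have "\<delta> = 1 \<or> \<delta> = -1"
    using det unfolding \<delta>_def by (auto simp: abs_if split: if_splits)
  then have \<delta>\<delta>: "\<delta> * \<delta> = 1"
    by auto
  have "(\<delta> * a22) * (\<delta> * a11) - (- \<delta> * a12) * (- \<delta> * a21) = \<delta> * \<delta> * (a11 * a22 - a12 * a21)"
    by (simp add: algebra_simps)
  then have "\<bar>(\<delta> * a22) * (\<delta> * a11) - (- \<delta> * a12) * (- \<delta> * a21)\<bar> = 1"
    using det \<delta>\<delta> by simp
  moreover have "g (x, y) =
      (of_int (\<delta> * a22) * x + of_int (- \<delta> * a12) * y + of_int (- \<delta> * (a22 * v1 - a12 * v2)),
       of_int (- \<delta> * a21) * x + of_int (\<delta> * a11) * y + of_int (- \<delta> * (a11 * v2 - a21 * v1)))"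
    for x y
    by (simp add: g_def)
  ultimately have "unimodular_affine g"
    by (rule unimodular_affineI)
  moreover have "g (f p) = p" for p
  proof -
    have "g (f p) = of_int (\<delta> * (a11 * a22 - a12 * a21)) *\<^sub>R p"
      by (cases p) (simp add: f g_def algebra_simps)
    then show ?thesis
      using \<delta>\<delta> unfolding \<delta>_def by simp
  qed
  moreover have "f (g q) = q" for q
  proof -
    have "f (g q) = of_int (\<delta> * (a11 * a22 - a12 * a21)) *\<^sub>R q
        + of_int (1 - \<delta> * (a11 * a22 - a12 * a21)) *\<^sub>R (of_int v1, of_int v2)"
      by (cases q) (simp add: f g_def algebra_simps)
    then show ?thesis
      using \<delta>\<delta> unfolding \<delta>_def by (simp add: zero_prod_def)
  qed
  ultimately show ?thesis
    using that by blast
qed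

lemma unimodular_affine_lattice_point:
  assumes "unimodular_affine f" "lattice_point p"
  shows "lattice_point (f p)"
proof -
  obtain a11 a12 a21 a22 v1 v2 :: int where
    f: "\<And>x y. f (x, y) = (of_int a11 * x + of_int a12 * y + of_int v1,
                         of_int a21 * x + of_int a22 * y + of_int v2)"
    using assms(1) by (elim unimodular_affineE) blast
  obtain x y where "p = (x, y)" "x \<in> \<int>" "y \<in> \<int>"
    using assms(2) unfolding lattice_point_def by (metis prod.collapse)
  then show ?thesis
    unfolding lattice_point_def by (simp add: f)
qed

lemma unimodular_affine_convex_hull_image:
  assumes "unimodular_affine f"
  shows "f ` (convex hull V) = convex hull (f ` V)"
proof -
  obtain a11 a12 a21 a22 v1 v2 :: int where
    f: "\<And>x y. f (x, y) = (of_int a11 * x + of_int a12 * y + of_int v1,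
                         of_int a21 * x + of_int a22 * y + of_int v2)"
    using assms by (elim unimodular_affineE) blast
  define L :: "real \<times> real \<Rightarrow> real \<times> real" where
    "L = (\<lambda>(x, y). (of_int a11 * x + of_int a12 * y, of_int a21 * x + of_int a22 * y))"
  have "linear L"
    unfolding L_def by (intro linearI) (auto simp: algebra_simps)
  have "f ` X = (+) (of_int v1, of_int v2) ` L ` X" for X
    by (force simp: f L_def image_iff)
  then show ?thesis
    by (simp only: convex_hull_linear_image[OF \<open>linear L\<close>] convex_hull_translation)
qed

lemma lattice_polygon_unimodular_image:
  assumes "unimodular_affine f" "lattice_polygon P"
  shows "lattice_polygon (f ` P)"
proof -
  obtain V where "finite V" "V \<noteq> {}" "\<forall>v\<in>V. lattice_point v" "P = convex hull V"
    using assms(2) unfolding lattice_polygon_def by blast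
  then show ?thesis
    unfolding lattice_polygon_def using assms(1)
    by (intro exI[of _ "f ` V"])
       (auto simp: unimodular_affine_lattice_point unimodular_affine_convex_hull_image)
qed

lemma ls_square_unimodular_image:
  assumes "unimodular_affine f"
  shows "ls_square (f ` S) = ls_square S"
proof -
  obtain g where g: "unimodular_affine g" "\<And>p. g (f p) = p"
    using assms unimodular_affine_inverse by blast
  let ?fits = "\<lambda>S l. \<exists>\<phi>. unimodular_affine \<phi> \<and> \<phi> ` S \<subseteq> (\<lambda>p. l *\<^sub>R p) ` unit_square"
  have "?fits (f ` S) l \<longleftrightarrow> ?fits S l" for l
  proof
    assume "?fits (f ` S) l"
    then obtain \<phi> where \<phi>: "unimodular_affine \<phi>" "\<phi> ` f ` S \<subseteq> (\<lambda>p. l *\<^sub>R p) ` unit_square"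
      by blast
    have "(\<phi> \<circ> f) ` S = \<phi> ` f ` S"
      by (simp add: image_comp)
    then show "?fits S l"
      using \<phi> unimodular_affine_comp[OF assms \<phi>(1)] by (intro exI[of _ "\<phi> \<circ> f"]) auto
  next
    assume "?fits S l"
    then obtain \<phi> where \<phi>: "unimodular_affine \<phi>" "\<phi> ` S \<subseteq> (\<lambda>p. l *\<^sub>R p) ` unit_square"
      by blast
    have "(\<phi> \<circ> g) ` f ` S = \<phi> ` S"
      using g(2) by (simp add: image_comp comp_def)
    then show "?fits (f ` S) l"
      using \<phi> unimodular_affine_comp[OF g(1) \<phi>(1)] by (intro exI[of _ "\<phi> \<circ> g"]) auto
  qed
  then show ?thesis
    unfolding ls_square_def by simp
qed

lemma lattice_equivalent_convex_hull:
  assumes "unimodular_affine f" "f ` V = V'"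
  shows "lattice_equivalent (convex hull V) (convex hull V')"
  unfolding lattice_equivalent_def
  using assms unimodular_affine_convex_hull_image by blast

lemma minimal_polygon_lattice_equivalent:
  assumes "lattice_equivalent P Q" "minimal_polygon P"
  shows "minimal_polygon Q"
proof -
  obtain f where f: "unimodular_affine f" "f ` P = Q"
    using assms(1) unfolding lattice_equivalent_def by blast
  obtain g where g: "unimodular_affine g" "\<And>p. g (f p) = p" "\<And>q. f (g q) = q"
    using f(1) unimodular_affine_inverse by blast
  have "lattice_polygon Q"
    using assms(2) f lattice_polygon_unimodular_image unfolding minimal_polygon_def by blast
  moreover have False if Q': "lattice_polygon Q'" "Q' \<subset> Q" "ls_square Q' = ls_square Q" for Q'
  proof -
    have "inj g"
      using g(3) by (metis injI)
    have "g ` Q = P"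
      unfolding f(2)[symmetric] image_comp using g(2) by (simp add: comp_def)
    then have "g ` Q' \<subset> P"
      using \<open>inj g\<close> Q'(2) by (auto simp: inj_image_subset_iff inj_image_eq_iff psubset_eq)
    moreover have "ls_square (g ` Q') = ls_square P"
      using Q'(3) f ls_square_unimodular_image[OF f(1), of P] ls_square_unimodular_image[OF g(1)]
      by simp
    ultimately show False
      using assms(2) lattice_polygon_unimodular_image[OF g(1) Q'(1)]
      unfolding minimal_polygon_def by blast
  qed
  ultimately show ?thesis
    unfolding minimal_polygon_def by blast
qed

section \<open>Bounds for the lattice size\<close>

lemma ls_square_le_strips:
  fixes a b c d m n :: int and L :: real
  assumes det: "\<bar>a * d - b * c\<bar> = 1" and "0 < L"
    and strip1: "\<forall>p\<in>S. of_int m \<le> of_int a * fst p + of_int b * snd p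
                    \<and> of_int a * fst p + of_int b * snd p \<le> of_int m + L"
    and strip2: "\<forall>p\<in>S. of_int n \<le> of_int c * fst p + of_int d * snd p
                    \<and> of_int c * fst p + of_int d * snd p \<le> of_int n + L"
  shows "ls_square S \<le> L"
proof -
  define f :: "real \<times> real \<Rightarrow> real \<times> real" where "f = (\<lambda>(x, y).
    (of_int a * x + of_int b * y + of_int (- m), of_int c * x + of_int d * y + of_int (- n)))"
  have "unimodular_affine f"
    using det by (rule unimodular_affineI[where s = "- m" and t = "- n"]) (simp add: f_def)
  moreover have "f ` S \<subseteq> (\<lambda>p. L *\<^sub>R p) ` unit_square"
  proof
    fix z assume "z \<in> f ` S"
    then obtain p where "p \<in> S" "z = f p"
      by blast
    then have "(1 / L) *\<^sub>R z \<in> unit_square"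
      using strip1 strip2 \<open>0 < L\<close> unfolding unit_square_def f_def
      by (auto simp: case_prod_beta field_simps)
    moreover have "z = L *\<^sub>R ((1 / L) *\<^sub>R z)"
      using \<open>0 < L\<close> by simp
    ultimately show "z \<in> (\<lambda>p. L *\<^sub>R p) ` unit_square"
      by blast
  qed
  ultimately show ?thesis
    unfolding ls_square_def using \<open>0 < L\<close>
    by (intro cInf_lower) (auto intro: bdd_belowI[of _ 0])
qed

lemma ls_square_le_of_subset_box:
  assumes "0 < L" "\<forall>p\<in>S. 0 \<le> fst p \<and> fst p \<le> L \<and> 0 \<le> snd p \<and> snd p \<le> L"
  shows "ls_square S \<le> L"
  by (rule ls_square_le_strips[where a = 1 and b = 0 and c = 0 and d = 1 and m = 0 and n = 0])
     (use assms in auto)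

definition lattice_differences :: "(real \<times> real) set \<Rightarrow> (int \<times> int) set" where
  "lattice_differences S = {(X' - X, Y' - Y) | X Y X' Y'.
     (of_int X, of_int Y) \<in> S \<and> (of_int X', of_int Y') \<in> S}"

lemma lattice_differencesI:
  assumes "(of_int X, of_int Y) \<in> S" "(of_int X', of_int Y') \<in> S"
  shows "(X' - X, Y' - Y) \<in> lattice_differences S"
  using assms unfolding lattice_differences_def by blast

definition linear_form_reaches :: "int \<Rightarrow> (int \<times> int) set \<Rightarrow> int \<Rightarrow> int \<Rightarrow> bool" where
  "linear_form_reaches h D x y \<longleftrightarrow> (\<exists>(u, v)\<in>D. h \<le> \<bar>x * u + y * v\<bar>)"

definition unimodular_spread_ge :: "int \<Rightarrow> (int \<times> int) set \<Rightarrow> bool" where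
  "unimodular_spread_ge h D \<longleftrightarrow> (\<forall>p q r s. \<bar>p * s - q * r\<bar> = 1 \<longrightarrow>
     linear_form_reaches h D p q \<or> linear_form_reaches h D r s)"

lemma ls_square_ge_of_spread:
  assumes "0 \<le> L" "S \<subseteq> (\<lambda>p. L *\<^sub>R p) ` unit_square"
    and spread: "unimodular_spread_ge h (lattice_differences S)"
  shows "of_int h \<le> ls_square S"
  unfolding ls_square_def
proof (rule cInf_greatest)
  have "unimodular_affine id"
    by (rule unimodular_affineI[where a = 1 and b = 0 and c = 0 and d = 1 and s = 0 and t = 0]) auto
  moreover have "id ` S \<subseteq> (\<lambda>p. L *\<^sub>R p) ` unit_square"
    using assms(2) by simp
  ultimately show "{l. 0 \<le> l \<and> (\<exists>f. unimodular_affine f \<and> f ` S \<subseteq> (\<lambda>p. l *\<^sub>R p) ` unit_square)} \<noteq> {}"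
    using assms(1) by blast
next
  fix l assume "l \<in> {l. 0 \<le> l \<and> (\<exists>f. unimodular_affine f \<and> f ` S \<subseteq> (\<lambda>p. l *\<^sub>R p) ` unit_square)}"
  then obtain f where l: "0 \<le> l" and f: "unimodular_affine f" "f ` S \<subseteq> (\<lambda>p. l *\<^sub>R p) ` unit_square"
    by blast
  obtain a11 a12 a21 a22 v1 v2 :: int where det: "\<bar>a11 * a22 - a12 * a21\<bar> = 1"
    and f_eq: "\<And>x y. f (x, y) = (of_int a11 * x + of_int a12 * y + of_int v1,
                                of_int a21 * x + of_int a22 * y + of_int v2)"
    using f(1) by (elim unimodular_affineE) blast
  have box: "0 \<le> fst (f z) \<and> fst (f z) \<le> l \<and> 0 \<le> snd (f z) \<and> snd (f z) \<le> l" if "z \<in> S" for z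
  proof -
    obtain w where "w \<in> unit_square" "f z = l *\<^sub>R w"
      using f(2) \<open>z \<in> S\<close> by blast
    then show ?thesis
      using l unfolding unit_square_def by (auto intro: mult_left_le)
  qed
  obtain u v where "(u, v) \<in> lattice_differences S"
    and large: "h \<le> \<bar>a11 * u + a12 * v\<bar> \<or> h \<le> \<bar>a21 * u + a22 * v\<bar>"
    using spread det unfolding unimodular_spread_ge_def linear_form_reaches_def by blast
  then obtain X Y X' Y' where XY: "(of_int X, of_int Y) \<in> S" "(of_int X', of_int Y') \<in> S"
    and uv: "u = X' - X" "v = Y' - Y"
    unfolding lattice_differences_def by blast
  have "fst (f (of_int X', of_int Y')) - fst (f (of_int X, of_int Y)) = of_int (a11 * u + a12 * v)"
    "snd (f (of_int X', of_int Y')) - snd (f (of_int X, of_int Y)) = of_int (a21 * u + a22 * v)"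
    unfolding uv f_eq by (simp_all add: algebra_simps)
  then have "of_int \<bar>a11 * u + a12 * v\<bar> \<le> l" "of_int \<bar>a21 * u + a22 * v\<bar> \<le> l"
    using box[OF XY(1)] box[OF XY(2)] by (simp_all del: of_int_add of_int_mult of_int_diff; linarith)+
  then show "of_int h \<le> l"
    using large by (meson of_int_le_iff order_trans)
qed

lemma abs_row_ge_of_dominant:
  fixes p q k e h :: int
  assumes "2 \<le> h" "k = h \<or> k = h - 1" "\<bar>e\<bar> \<le> h - 2" "\<bar>q\<bar> < \<bar>p\<bar>"
  shows "h \<le> \<bar>p * k + q * e\<bar> \<or> (q = 0 \<and> k = h - 1)"
proof -
  have "0 \<le> k"
    using assms(1,2) by linarith
  then have "\<bar>p\<bar> * k - \<bar>q\<bar> * \<bar>e\<bar> \<le> \<bar>p * k + q * e\<bar>"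
    using abs_triangle_ineq2[of "p * k" "- (q * e)"] by (simp add: abs_mult)
  moreover have "h \<le> \<bar>p\<bar> * k - \<bar>q\<bar> * \<bar>e\<bar>" if "q \<noteq> 0 \<or> k = h"
  proof (cases "q = 0")
    case True
    then show ?thesis
      using that assms(1,4) by (simp add: mult_le_cancel_right1)
  next
    case False
    \<comment> \<open>\<open>|p| \<ge> |q| + 1\<close>, \<open>k \<ge> h - 1\<close> and \<open>|e| \<le> h - 2\<close> give at least \<open>h - 1 + |q|\<close>\<close>
    have "(\<bar>q\<bar> + 1) * (h - 1) \<le> \<bar>p\<bar> * k"
      using assms by (intro mult_mono) linarith+
    moreover have "\<bar>q\<bar> * \<bar>e\<bar> \<le> \<bar>q\<bar> * (h - 2)"
      using assms(3) by (intro mult_left_mono) auto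
    ultimately show ?thesis
      using False by (simp add: algebra_simps) linarith
  qed
  ultimately show ?thesis
    using assms(2) by linarith
qed

lemma linear_form_reaches_unless_diagonal:
  fixes h kx ex ky ey :: int
  assumes h: "2 \<le> h" and k: "kx = h \<or> kx = h - 1" "ky = h \<or> ky = h - 1"
    and e: "\<bar>ex\<bar> \<le> h - 2" "\<bar>ey\<bar> \<le> h - 2"
    and D: "(kx, ex) \<in> D" "(ey, ky) \<in> D"
  shows "linear_form_reaches h D x y \<or> \<bar>x\<bar> = \<bar>y\<bar> \<or> (y = 0 \<and> kx = h - 1) \<or> (x = 0 \<and> ky = h - 1)"
proof -
  consider "\<bar>y\<bar> < \<bar>x\<bar>" | "\<bar>x\<bar> < \<bar>y\<bar>" | "\<bar>x\<bar> = \<bar>y\<bar>"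
    by linarith
  then show ?thesis
  proof cases
    case 1
    then show ?thesis
      using abs_row_ge_of_dominant[OF h k(1) e(1) 1] D(1) unfolding linear_form_reaches_def by blast
  next
    case 2
    have "h \<le> \<bar>y * ky + x * ey\<bar> \<or> (x = 0 \<and> ky = h - 1)"
      using abs_row_ge_of_dominant[OF h k(2) e(2) 2] .
    then show ?thesis
      using D(2) unfolding linear_form_reaches_def by (auto simp: add.commute)
  qed simp
qed

lemma linear_form_reaches_diagonal:
  fixes x y h :: int
  assumes "\<bar>x\<bar> = \<bar>y\<bar>" "x \<noteq> 0" "0 \<le> h"
    and "(s1, s2) \<in> D" "h \<le> s1 + s2" "(t1, t2) \<in> D" "h \<le> t1 - t2"
  shows "linear_form_reaches h D x y"
proof -
  have "1 * h \<le> \<bar>x\<bar> * \<bar>s1 + s2\<bar>" "1 * h \<le> \<bar>x\<bar> * \<bar>t1 - t2\<bar>"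
    using assms by (intro mult_mono; linarith)+
  then have "h \<le> \<bar>x * s1 + x * s2\<bar>" "h \<le> \<bar>x * t1 + (- x) * t2\<bar>"
    by (simp_all add: abs_mult[symmetric] distrib_left right_diff_distrib)
  moreover have "y = x \<or> y = - x"
    using assms(1) by (auto simp: abs_eq_iff)
  ultimately show ?thesis
    using assms(4,6) unfolding linear_form_reaches_def by blast
qed

lemma even_det_of_diagonal_rows:
  fixes p q r s :: int
  assumes "\<bar>p\<bar> = \<bar>q\<bar>" "\<bar>r\<bar> = \<bar>s\<bar>"
  shows "even (p * s - q * r)"
proof -
  have "even p = even q" "even r = even s"
    using assms by (metis add.right_neutral even_abs_add_iff)+
  then show ?thesis
    by auto
qed

text \<open>A row \<open>(x, y)\<close> with \<open>|x| \<noteq> |y|\<close> is caught by the near-horizontal or the near-vertical vector, except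
  for the axis rows excused by a width \<open>h - 1\<close>; the diagonal vectors catch the rows with \<open>|x| = |y|\<close>,
  and two such rows cannot form a unimodular matrix.\<close>

lemma unimodular_spread_ge_of_widths:
  fixes h kx ex ky ey :: int
  assumes h: "2 \<le> h" and k: "kx = h \<or> kx = h - 1" "ky = h \<or> ky = h - 1" "kx = h \<or> ky = h"
    and e: "\<bar>ex\<bar> \<le> h - 2" "\<bar>ey\<bar> \<le> h - 2"
    and D: "(kx, ex) \<in> D" "(ey, ky) \<in> D"
    and diagonals: "kx = h - 1 \<or> ky = h - 1 \<Longrightarrow>
      \<exists>(s1, s2)\<in>D. \<exists>(t1, t2)\<in>D. h \<le> s1 + s2 \<and> h \<le> t1 - t2"
  shows "unimodular_spread_ge h D"
  unfolding unimodular_spread_ge_def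
proof (intro allI impI)
  fix p q r s :: int assume det: "\<bar>p * s - q * r\<bar> = 1"
  note row = linear_form_reaches_unless_diagonal[OF h k(1,2) e D]
  have diagonal: "linear_form_reaches h D x y"
    if xy: "\<bar>x\<bar> = \<bar>y\<bar>" "x \<noteq> 0 \<or> y \<noteq> 0" and width: "kx = h - 1 \<or> ky = h - 1" for x y
  proof -
    obtain s1 s2 t1 t2 where "(s1, s2) \<in> D" "h \<le> s1 + s2" "(t1, t2) \<in> D" "h \<le> t1 - t2"
      using diagonals[OF width] by blast
    moreover have "x \<noteq> 0" "0 \<le> h"
      using xy h by auto
    ultimately show ?thesis
      using linear_form_reaches_diagonal[OF xy(1)] by blast
  qed
  show "linear_form_reaches h D p q \<or> linear_form_reaches h D r s"
  proof (rule ccontr)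
    assume bad: "\<not> ?thesis"
    then have 1: "\<bar>p\<bar> = \<bar>q\<bar> \<or> (q = 0 \<and> kx = h - 1) \<or> (p = 0 \<and> ky = h - 1)"
      and 2: "\<bar>r\<bar> = \<bar>s\<bar> \<or> (s = 0 \<and> kx = h - 1) \<or> (r = 0 \<and> ky = h - 1)"
      using row by blast+
    have nz: "p \<noteq> 0 \<or> q \<noteq> 0" "r \<noteq> 0 \<or> s \<noteq> 0"
      using det by auto
    have "odd (p * s - q * r)"
      using det by (metis add.right_neutral even_abs_add_iff odd_one)
    then have "\<not> (\<bar>p\<bar> = \<bar>q\<bar> \<and> \<bar>r\<bar> = \<bar>s\<bar>)"
      using even_det_of_diagonal_rows by blast
    moreover have False if "\<bar>p\<bar> = \<bar>q\<bar>" "(s = 0 \<and> kx = h - 1) \<or> (r = 0 \<and> ky = h - 1)"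
      using diagonal[of p q] that nz(1) bad by blast
    moreover have False if "\<bar>r\<bar> = \<bar>s\<bar>" "(q = 0 \<and> kx = h - 1) \<or> (p = 0 \<and> ky = h - 1)"
      using diagonal[of r s] that nz(2) bad by blast
    moreover have False
      if "(q = 0 \<and> kx = h - 1) \<or> (p = 0 \<and> ky = h - 1)" "(s = 0 \<and> kx = h - 1) \<or> (r = 0 \<and> ky = h - 1)"
      using that det k h by auto
    ultimately show False
      using 1 2 by blast
  qed
qed

section \<open>The quadrilateral \<open>Q\<close>\<close>

definition quadQ_vertices :: "int \<Rightarrow> int \<Rightarrow> int \<Rightarrow> int \<Rightarrow> int \<Rightarrow> (real \<times> real) set" where
  "quadQ_vertices h a b c d =
     {(of_int a, 0), (0, of_int b), (of_int h, of_int (h - c)), (of_int (h - d), of_int h)}"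

lemma quadQ_eq_convex_hull_vertices: "quadQ h a b c d = convex hull quadQ_vertices h a b c d"
  unfolding quadQ_def quadQ_vertices_def ..

lemma quadQ_vertices_mem:
  "(of_int a, of_int 0) \<in> quadQ h a b c d" "(of_int 0, of_int b) \<in> quadQ h a b c d"
  "(of_int h, of_int (h - c)) \<in> quadQ h a b c d" "(of_int (h - d), of_int h) \<in> quadQ h a b c d"
  unfolding quadQ_def by (simp_all add: hull_inc)

lemma lattice_polygon_quadQ: "lattice_polygon (quadQ h a b c d)"
  unfolding lattice_polygon_def quadQ_eq_convex_hull_vertices
  by (intro exI[of _ "quadQ_vertices h a b c d"]) (auto simp: quadQ_vertices_def lattice_point_def)

lemma quadQ_strips:
  assumes "a \<in> {1..h-1}" "b \<in> {1..h-1}" "c \<in> {1..h-1}" "d \<in> {1..h-1}" "p \<in> quadQ h a b c d"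
  shows "0 \<le> fst p" "fst p \<le> of_int h" "0 \<le> snd p" "snd p \<le> of_int h"
    and "of_int (min a b) \<le> fst p + snd p" "fst p + snd p \<le> 2 * of_int h - of_int (min c d)"
    and "- of_int (max b d) \<le> fst p - snd p" "fst p - snd p \<le> of_int (max a c)"
proof -
  have halfplane: "\<alpha> * fst p + \<beta> * snd p \<le> k"
    if "\<forall>v\<in>quadQ_vertices h a b c d. \<alpha> * fst v + \<beta> * snd v \<le> k" for \<alpha> \<beta> k
    using convex_hull_halfplane[OF that] assms(5) unfolding quadQ_eq_convex_hull_vertices .
  show "0 \<le> fst p" "fst p \<le> of_int h" "0 \<le> snd p" "snd p \<le> of_int h"
    using halfplane[of "-1" 0 0] halfplane[of 1 0 "of_int h"] halfplane[of 0 "-1" 0] halfplane[of 0 1 "of_int h"]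
      assms(1-4) by (auto simp: quadQ_vertices_def)
  show "of_int (min a b) \<le> fst p + snd p" "fst p + snd p \<le> 2 * of_int h - of_int (min c d)"
    using halfplane[of "-1" "-1" "- of_int (min a b)"] halfplane[of 1 1 "2 * of_int h - of_int (min c d)"]
      assms(1-4) by (auto simp: quadQ_vertices_def min_def)
  show "- of_int (max b d) \<le> fst p - snd p" "fst p - snd p \<le> of_int (max a c)"
    using halfplane[of "-1" 1 "of_int (max b d)"] halfplane[of 1 "-1" "of_int (max a c)"]
      assms(1-4) by (auto simp: quadQ_vertices_def max_def)
qed

lemma ls_square_le_of_subset_quadQ:
  assumes "a \<in> {1..h-1}" "b \<in> {1..h-1}" "c \<in> {1..h-1}" "d \<in> {1..h-1}" "S \<subseteq> quadQ h a b c d"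
  shows "ls_square S \<le> of_int h"
  using assms quadQ_strips(1-4)[OF assms(1-4)]
  by (intro ls_square_le_of_subset_box) auto

lemma quadQ_subset_box:
  assumes "a \<in> {1..h-1}" "b \<in> {1..h-1}" "c \<in> {1..h-1}" "d \<in> {1..h-1}"
  shows "quadQ h a b c d \<subseteq> (\<lambda>p. of_int h *\<^sub>R p) ` unit_square"
proof
  fix p assume "p \<in> quadQ h a b c d"
  then have "(1 / of_int h) *\<^sub>R p \<in> unit_square"
    using quadQ_strips(1-4)[OF assms] assms unfolding unit_square_def by (auto simp: field_simps)
  moreover have "p = of_int h *\<^sub>R ((1 / of_int h) *\<^sub>R p)"
    using assms by simp
  ultimately show "p \<in> (\<lambda>p. of_int h *\<^sub>R p) ` unit_square"
    by blast
qed

lemma ls_square_quadQ: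
  assumes "a \<in> {1..h-1}" "b \<in> {1..h-1}" "c \<in> {1..h-1}" "d \<in> {1..h-1}"
  shows "ls_square (quadQ h a b c d) = of_int h"
proof (rule antisym)
  show "ls_square (quadQ h a b c d) \<le> of_int h"
    using assms by (rule ls_square_le_of_subset_quadQ) simp
  have "(h, h - c - b) \<in> lattice_differences (quadQ h a b c d)"
    using lattice_differencesI[OF quadQ_vertices_mem(2,3)] by simp
  moreover have "(h - d - a, h) \<in> lattice_differences (quadQ h a b c d)"
    using lattice_differencesI[OF quadQ_vertices_mem(1,4)] by simp
  ultimately have "unimodular_spread_ge h (lattice_differences (quadQ h a b c d))"
    using assms by (intro unimodular_spread_ge_of_widths[where kx = h and ky = h]) auto
  then show "of_int h \<le> ls_square (quadQ h a b c d)"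
    using assms by (intro ls_square_ge_of_spread[OF _ quadQ_subset_box]) auto
qed

lemma quadQ_vertex_support:
  assumes "a \<in> {1..h-1}" "b \<in> {1..h-1}" "c \<in> {1..h-1}" "d \<in> {1..h-1}"
    and "v \<in> quadQ_vertices h a b c d"
  obtains \<alpha> \<beta> k :: int where "\<bar>\<alpha>\<bar> + \<bar>\<beta>\<bar> = 1"
    and "of_int \<alpha> * fst v + of_int \<beta> * snd v = of_int k"
    and "\<forall>w\<in>quadQ_vertices h a b c d - {v}. of_int k < of_int \<alpha> * fst w + of_int \<beta> * snd w"
    and "\<forall>p\<in>quadQ h a b c d. of_int \<alpha> * fst p + of_int \<beta> * snd p \<le> of_int k + of_int h"
proof -
  note strips = quadQ_strips(1-4)[OF assms(1-4)]
  consider "v = (of_int a, 0)" | "v = (0, of_int b)" | "v = (of_int h, of_int (h - c))"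
    | "v = (of_int (h - d), of_int h)"
    using assms(5) unfolding quadQ_vertices_def by blast
  then show ?thesis
  proof cases
    case 1
    show ?thesis
      by (rule that[of 0 1 0]) (use 1 assms strips in \<open>auto simp: quadQ_vertices_def\<close>)
  next
    case 2
    show ?thesis
      by (rule that[of 1 0 0]) (use 2 assms strips in \<open>auto simp: quadQ_vertices_def\<close>)
  next
    case 3
    show ?thesis
      by (rule that[of "-1" 0 "-h"]) (use 3 assms strips in \<open>auto simp: quadQ_vertices_def\<close>)
  next
    case 4
    show ?thesis
      by (rule that[of 0 "-1" "-h"]) (use 4 assms strips in \<open>auto simp: quadQ_vertices_def\<close>)
  qed
qed

text \<open>A proper lattice subpolygon misses a vertex \<open>v\<close> of \<open>Q\<close>, and \<open>v\<close> is the only lattice point of \<open>Q\<close> on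
  its side of the square \<open>[0, h]\<^sup>2\<close>.\<close>

lemma proper_lattice_subpolygon_quadQ_axis_strip:
  assumes params: "a \<in> {1..h-1}" "b \<in> {1..h-1}" "c \<in> {1..h-1}" "d \<in> {1..h-1}"
    and P: "lattice_polygon P" "P \<subset> quadQ h a b c d"
  obtains \<alpha> \<beta> k :: int where "\<bar>\<alpha>\<bar> + \<bar>\<beta>\<bar> = 1"
    and "\<forall>p\<in>P. of_int (k + 1) \<le> of_int \<alpha> * fst p + of_int \<beta> * snd p
      \<and> of_int \<alpha> * fst p + of_int \<beta> * snd p \<le> of_int (k + 1) + (of_int h - 1)"
proof -
  have "\<not> quadQ_vertices h a b c d \<subseteq> P"
  proof
    assume "quadQ_vertices h a b c d \<subseteq> P"
    moreover have "convex P"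
      using P(1) unfolding lattice_polygon_def by auto
    ultimately have "quadQ h a b c d \<subseteq> P"
      unfolding quadQ_eq_convex_hull_vertices by (rule hull_minimal)
    then show False
      using P(2) by blast
  qed
  then obtain v where v: "v \<in> quadQ_vertices h a b c d" "v \<notin> P"
    by blast
  obtain \<alpha> \<beta> k :: int where \<alpha>\<beta>: "\<bar>\<alpha>\<bar> + \<bar>\<beta>\<bar> = 1"
    and vk: "of_int \<alpha> * fst v + of_int \<beta> * snd v = of_int k"
    and others: "\<forall>w\<in>quadQ_vertices h a b c d - {v}. of_int k < of_int \<alpha> * fst w + of_int \<beta> * snd w"
    and upper: "\<forall>p\<in>quadQ h a b c d. of_int \<alpha> * fst p + of_int \<beta> * snd p \<le> of_int k + of_int h"
    using quadQ_vertex_support[OF params v(1)] by blast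
  have fin: "finite (quadQ_vertices h a b c d)"
    by (simp add: quadQ_vertices_def)
  have sub: "P \<subseteq> convex hull quadQ_vertices h a b c d"
    using P(2) unfolding quadQ_eq_convex_hull_vertices by blast
  note lower = lattice_polygon_halfplane_above_vertex[OF fin v(1) vk others P(1) sub v(2)]
  have "\<forall>p\<in>P. of_int (k + 1) \<le> of_int \<alpha> * fst p + of_int \<beta> * snd p
      \<and> of_int \<alpha> * fst p + of_int \<beta> * snd p \<le> of_int (k + 1) + (of_int h - 1)"
    using lower upper P(2) by fastforce
  with \<alpha>\<beta> show ?thesis
    by (rule that)
qed

lemma minimal_polygon_quadQ:
  assumes params: "a \<in> {1..h-1}" "b \<in> {1..h-1}" "c \<in> {1..h-1}" "d \<in> {1..h-1}"
    and cond: "condA h a b c d \<or> condB h a b c d"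
  shows "minimal_polygon (quadQ h a b c d)"
  unfolding minimal_polygon_def
proof (intro conjI lattice_polygon_quadQ notI, elim exE conjE)
  fix P assume P: "lattice_polygon P" "P \<subset> quadQ h a b c d" "ls_square P = ls_square (quadQ h a b c d)"
  obtain \<alpha> \<beta> k :: int where \<alpha>\<beta>: "\<bar>\<alpha>\<bar> + \<bar>\<beta>\<bar> = 1"
    and axis: "\<forall>p\<in>P. of_int (k + 1) \<le> of_int \<alpha> * fst p + of_int \<beta> * snd p
      \<and> of_int \<alpha> * fst p + of_int \<beta> * snd p \<le> of_int (k + 1) + (of_int h - 1)"
    using proper_lattice_subpolygon_quadQ_axis_strip[OF params P(1,2)] by blast
  have L: "(0::real) < of_int h - 1"
    using params by simp
  have "ls_square P \<le> of_int h - 1"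
    using cond
  proof
    assume "condA h a b c d"
    then have "\<forall>p\<in>P. of_int (min a b) \<le> of_int 1 * fst p + of_int 1 * snd p
        \<and> of_int 1 * fst p + of_int 1 * snd p \<le> of_int (min a b) + (of_int h - 1)"
      using quadQ_strips(5,6)[OF params] P(2) unfolding condA_def by fastforce
    moreover have "\<bar>\<alpha> * 1 - \<beta> * 1\<bar> = 1"
      using \<alpha>\<beta> by arith
    ultimately show ?thesis
      using ls_square_le_strips[OF _ L axis] by blast
  next
    assume "condB h a b c d"
    then have "\<forall>p\<in>P. of_int (- max b d) \<le> of_int 1 * fst p + of_int (- 1) * snd p
        \<and> of_int 1 * fst p + of_int (- 1) * snd p \<le> of_int (- max b d) + (of_int h - 1)"
      using quadQ_strips(7,8)[OF params] P(2) unfolding condB_def by fastforce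
    moreover have "\<bar>\<alpha> * (- 1) - \<beta> * 1\<bar> = 1"
      using \<alpha>\<beta> by arith
    ultimately show ?thesis
      using ls_square_le_strips[OF _ L axis] by blast
  qed
  then show False
    using P(3) ls_square_quadQ[OF params] by simp
qed

lemma quadQ_lifted_bottom_vertex_mem:
  assumes "a \<in> {1..h-1}" "b \<in> {1..h-1}" "c \<in> {1..h-1}" "d \<in> {1..h-1}"
  shows "(of_int a, of_int 1) \<in> quadQ h a b c d"
proof -
  \<comment> \<open>\<open>(a, 1)\<close> is a convex combination of \<open>(a, 0)\<close> and the point of the edge from \<open>(0, b)\<close> to
    \<open>(h, h - c)\<close> above it, which has height \<open>N / h \<ge> 1\<close>\<close>
  define N where "N = real_of_int (b * (h - a) + a * (h - c))"
  have "h - a \<le> b * (h - a)" "a \<le> a * (h - c)"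
    using mult_right_mono[of 1 b "h - a"] mult_left_mono[of 1 "h - c" a] assms by simp_all
  then have "of_int h \<le> N"
    unfolding N_def by (subst of_int_le_iff) linarith
  moreover have "(0::real) < of_int h"
    using assms by simp
  ultimately have "0 < N"
    by linarith
  define u v w where "u = 1 - of_int h / N" and "v = of_int (h - a) / N" and "w = of_int a / N"
  have "0 \<le> u" "0 \<le> v" "0 \<le> w" "u + v + w = 1"
    using assms \<open>of_int h \<le> N\<close> \<open>0 < N\<close> unfolding u_def v_def w_def by (auto simp: field_simps)
  moreover have "u * of_int a + w * of_int h = of_int a"
    using \<open>0 < N\<close> unfolding u_def w_def by (simp add: field_simps)
  moreover have "v * of_int b + w * of_int (h - c) = 1"
  proof -
    have N_eq: "N = of_int (h - a) * of_int b + of_int a * of_int (h - c)"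
      unfolding N_def by (simp add: algebra_simps)
    have "v * of_int b + w * of_int (h - c) = (of_int (h - a) * of_int b + of_int a * of_int (h - c)) / N"
      using \<open>0 < N\<close> unfolding v_def w_def by (simp add: field_simps)
    also have "\<dots> = 1"
      using N_eq \<open>0 < N\<close> by simp
    finally show ?thesis .
  qed
  ultimately have "(real_of_int a, real_of_int 1) = u *\<^sub>R (real_of_int a, 0) + v *\<^sub>R (0, of_int b) + w *\<^sub>R (of_int h, real_of_int (h - c))"
    by (simp add: prod_eq_iff)
  with \<open>0 \<le> u\<close> \<open>0 \<le> v\<close> \<open>0 \<le> w\<close> \<open>u + v + w = 1\<close>
  have "(real_of_int a, real_of_int 1) \<in> convex hull {(real_of_int a, 0), (0, real_of_int b), (real_of_int h, real_of_int (h - c))}"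
    unfolding convex_hull_3 by blast
  also have "\<dots> \<subseteq> quadQ h a b c d"
    unfolding quadQ_def by (rule hull_mono) auto
  finally show ?thesis .
qed

text \<open>The vertex \<open>(a, 0)\<close> can be raised to \<open>(a, 1)\<close> without either diagonal width of \<open>Q\<close> dropping
  below \<open>h\<close>.\<close>

definition bottom_vertex_liftable :: "int \<Rightarrow> int \<Rightarrow> int \<Rightarrow> int \<Rightarrow> int \<Rightarrow> bool" where
  "bottom_vertex_liftable h a b c d \<longleftrightarrow> min c d + min b (a + 1) \<le> h \<and> h \<le> max c (a - 1) + max b d"

definition lifted_corners :: "int \<Rightarrow> int \<Rightarrow> int \<Rightarrow> int \<Rightarrow> int \<Rightarrow> (int \<times> int) set" where
  "lifted_corners h a b c d = {(a, 1), (0, b), (h, h - c), (h - d, h)}"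

definition quadQ_lifted :: "int \<Rightarrow> int \<Rightarrow> int \<Rightarrow> int \<Rightarrow> int \<Rightarrow> (real \<times> real) set" where
  "quadQ_lifted h a b c d =
     convex hull ((\<lambda>(x, y). (real_of_int x, real_of_int y)) ` lifted_corners h a b c d)"

lemma lattice_polygon_quadQ_lifted: "lattice_polygon (quadQ_lifted h a b c d)"
  unfolding lattice_polygon_def quadQ_lifted_def
  by (intro exI[of _ "(\<lambda>(x, y). (real_of_int x, real_of_int y)) ` lifted_corners h a b c d"])
     (auto simp: lifted_corners_def lattice_point_def)

lemma quadQ_lifted_psubset:
  assumes params: "a \<in> {1..h-1}" "b \<in> {1..h-1}" "c \<in> {1..h-1}" "d \<in> {1..h-1}"
  shows "quadQ_lifted h a b c d \<subset> quadQ h a b c d"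
proof -
  let ?C = "(\<lambda>(x, y). (real_of_int x, real_of_int y)) ` lifted_corners h a b c d"
  have "?C \<subseteq> quadQ h a b c d"
    using quadQ_lifted_bottom_vertex_mem[OF params] quadQ_vertices_mem
    unfolding lifted_corners_def by auto
  moreover have "convex (quadQ h a b c d)"
    unfolding quadQ_def by (rule convex_convex_hull)
  ultimately have "quadQ_lifted h a b c d \<subseteq> quadQ h a b c d"
    unfolding quadQ_lifted_def by (rule hull_minimal)
  moreover have "(of_int a, 0) \<notin> quadQ_lifted h a b c d"
  proof
    assume "(of_int a, 0) \<in> quadQ_lifted h a b c d"
    moreover have "\<forall>v\<in>?C. 0 * fst v + (- 1) * snd v \<le> - 1"
      using params unfolding lifted_corners_def by auto
    ultimately show False
      using convex_hull_halfplane[of ?C 0 "- 1" "- 1" "(of_int a, 0)"] unfolding quadQ_lifted_def by simp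
  qed
  ultimately show ?thesis
    using quadQ_vertices_mem(1) by auto
qed

lemma quadQ_lifted_lattice_differences:
  assumes "p \<in> lifted_corners h a b c d" "q \<in> lifted_corners h a b c d"
  shows "(fst q - fst p, snd q - snd p) \<in> lattice_differences (quadQ_lifted h a b c d)"
proof -
  have corner: "(of_int x, of_int y) \<in> quadQ_lifted h a b c d" if "(x, y) \<in> lifted_corners h a b c d" for x y
    unfolding quadQ_lifted_def using that by (force intro: hull_inc)
  show ?thesis
    using lattice_differencesI[OF corner corner] assms by (metis prod.collapse)
qed

lemma ls_square_quadQ_lifted:
  assumes params: "a \<in> {1..h-1}" "b \<in> {1..h-1}" "c \<in> {1..h-1}" "d \<in> {1..h-1}"
    and lift: "bottom_vertex_liftable h a b c d"
  shows "ls_square (quadQ_lifted h a b c d) = of_int h"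
proof -
  note sub = psubset_imp_subset[OF quadQ_lifted_psubset[OF params]]
  note diff = quadQ_lifted_lattice_differences[of _ h a b c d]
  have "(h, h - c - b) \<in> lattice_differences (quadQ_lifted h a b c d)"
    "(h - d - a, h - 1) \<in> lattice_differences (quadQ_lifted h a b c d)"
    using diff[of "(0, b)" "(h, h - c)"] diff[of "(a, 1)" "(h - d, h)"] unfolding lifted_corners_def by simp_all
  moreover have "\<exists>(s1, s2)\<in>lattice_differences (quadQ_lifted h a b c d).
      \<exists>(t1, t2)\<in>lattice_differences (quadQ_lifted h a b c d). h \<le> s1 + s2 \<and> h \<le> t1 - t2"
  proof -
    \<comment> \<open>extreme corners in the directions \<open>x + y\<close> and \<open>x - y\<close>\<close>
    define p where "p = (if b \<le> a + 1 then (0, b) else (a, 1))"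
    define q where "q = (if c \<le> d then (h, h - c) else (h - d, h))"
    define p' where "p' = (if d \<le> b then (0, b) else (h - d, h))"
    define q' where "q' = (if a - 1 \<le> c then (h, h - c) else (a, 1))"
    have "p \<in> lifted_corners h a b c d" "q \<in> lifted_corners h a b c d"
      "p' \<in> lifted_corners h a b c d" "q' \<in> lifted_corners h a b c d"
      unfolding p_def q_def p'_def q'_def lifted_corners_def by simp_all
    moreover have "h \<le> (fst q - fst p) + (snd q - snd p)"
      using lift unfolding bottom_vertex_liftable_def p_def q_def by (simp add: min_def split: if_splits)
    moreover have "h \<le> (fst q' - fst p') - (snd q' - snd p')"
      using lift unfolding bottom_vertex_liftable_def p'_def q'_def by (simp add: max_def split: if_splits)
    ultimately show ?thesis
      using diff[of p q] diff[of p' q'] by blast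
  qed
  ultimately have "unimodular_spread_ge h (lattice_differences (quadQ_lifted h a b c d))"
    using params by (intro unimodular_spread_ge_of_widths[where kx = h and ky = "h - 1"]) auto
  then have "of_int h \<le> ls_square (quadQ_lifted h a b c d)"
    using quadQ_subset_box[OF params] sub params
    by (intro ls_square_ge_of_spread[where L = "of_int h"]) auto
  moreover have "ls_square (quadQ_lifted h a b c d) \<le> of_int h"
    using params sub by (rule ls_square_le_of_subset_quadQ)
  ultimately show ?thesis
    by simp
qed

lemma not_minimal_polygon_quadQ_if_liftable:
  assumes params: "a \<in> {1..h-1}" "b \<in> {1..h-1}" "c \<in> {1..h-1}" "d \<in> {1..h-1}"
    and "bottom_vertex_liftable h a b c d"
  shows "\<not> minimal_polygon (quadQ h a b c d)"
  using lattice_polygon_quadQ_lifted quadQ_lifted_psubset[OF params]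
    ls_square_quadQ_lifted[OF assms] ls_square_quadQ[OF params]
  unfolding minimal_polygon_def by auto

lemma lattice_equivalent_quadQ_transpose:
  "lattice_equivalent (quadQ h a b c d) (quadQ h b a d c)"
proof -
  have "unimodular_affine (\<lambda>(x, y). (y, x))"
    by (rule unimodular_affineI[where a = 0 and b = 1 and c = 1 and d = 0 and s = 0 and t = 0]) auto
  moreover have "(\<lambda>(x, y). (y, x)) ` quadQ_vertices h a b c d = quadQ_vertices h b a d c"
    unfolding quadQ_vertices_def by auto
  ultimately show ?thesis
    unfolding quadQ_eq_convex_hull_vertices by (rule lattice_equivalent_convex_hull)
qed

lemma lattice_equivalent_quadQ_reflect:
  "lattice_equivalent (quadQ h a b c d) (quadQ h (h - d) (h - b) (h - c) (h - a))"
proof -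
  have "unimodular_affine (\<lambda>(x, y). (x, of_int h - y))"
    by (rule unimodular_affineI[where a = 1 and b = 0 and c = 0 and d = "- 1" and s = 0 and t = h]) auto
  moreover have "(\<lambda>(x, y). (x, of_int h - y)) ` quadQ_vertices h a b c d
      = quadQ_vertices h (h - d) (h - b) (h - c) (h - a)"
    unfolding quadQ_vertices_def by auto
  ultimately show ?thesis
    unfolding quadQ_eq_convex_hull_vertices by (rule lattice_equivalent_convex_hull)
qed

lemma condA_reflect: "condA h a b c d \<Longrightarrow> condB h (h - d) (h - b) (h - c) (h - a)"
  and condB_reflect: "condB h a b c d \<Longrightarrow> condA h (h - d) (h - b) (h - c) (h - a)"
  unfolding condA_def condB_def by (auto simp: min_def max_def)

lemma not_condA_and_condB: "\<not> (condA h a b c d \<and> condB h a b c d)"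
  unfolding condA_def condB_def by linarith

lemma bottom_vertex_liftable_up_to_symmetry:
  assumes "\<not> condA h a b c d" "\<not> condB h a b c d"
  shows "bottom_vertex_liftable h a b c d \<or> bottom_vertex_liftable h b a d c
    \<or> bottom_vertex_liftable h (h - c) (h - a) (h - d) (h - b)
    \<or> bottom_vertex_liftable h (h - d) (h - b) (h - c) (h - a)"
proof -
  have "min a b + min c d \<le> h" "h \<le> max a c + max b d"
    using assms unfolding condA_def condB_def by simp_all
  then have "(min c d + min b (a + 1) \<le> h \<and> h \<le> max c (a - 1) + max b d)
    \<or> (min d c + min a (b + 1) \<le> h \<and> h \<le> max d (b - 1) + max a c)
    \<or> (min (c + 1) d + min a b \<le> h \<and> h \<le> max a (c - 1) + max b d)
    \<or> (min c (d + 1) + min a b \<le> h \<and> h \<le> max a c + max b (d - 1))"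
    by (cases "a \<le> b"; cases "c \<le> d"; cases "a \<le> c"; cases "b \<le> d";
        simp add: min_def max_def split: if_splits; linarith)
  moreover have "bottom_vertex_liftable h (h - c) (h - a) (h - d) (h - b)
      \<longleftrightarrow> min (c + 1) d + min a b \<le> h \<and> h \<le> max a (c - 1) + max b d"
    "bottom_vertex_liftable h (h - d) (h - b) (h - c) (h - a)
      \<longleftrightarrow> min c (d + 1) + min a b \<le> h \<and> h \<le> max a c + max b (d - 1)"
    unfolding bottom_vertex_liftable_def by (auto simp: min_def max_def)
  ultimately show ?thesis
    unfolding bottom_vertex_liftable_def by blast
qed

lemma not_minimal_polygon_quadQ:
  assumes params: "a \<in> {1..h-1}" "b \<in> {1..h-1}" "c \<in> {1..h-1}" "d \<in> {1..h-1}"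
    and "\<not> condA h a b c d" "\<not> condB h a b c d"
  shows "\<not> minimal_polygon (quadQ h a b c d)"
proof
  assume minimal: "minimal_polygon (quadQ h a b c d)"
  have "minimal_polygon (quadQ h b a d c)"
    using lattice_equivalent_quadQ_transpose minimal by (rule minimal_polygon_lattice_equivalent)
  moreover have "minimal_polygon (quadQ h (h - c) (h - a) (h - d) (h - b))"
    using lattice_equivalent_quadQ_reflect \<open>minimal_polygon (quadQ h b a d c)\<close>
    by (rule minimal_polygon_lattice_equivalent)
  moreover have "minimal_polygon (quadQ h (h - d) (h - b) (h - c) (h - a))"
    using lattice_equivalent_quadQ_reflect minimal by (rule minimal_polygon_lattice_equivalent)
  moreover have "h - x \<in> {1..h-1}" if "x \<in> {1..h-1}" for x
    using that by auto
  ultimately show False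
    using bottom_vertex_liftable_up_to_symmetry[OF assms(5,6)] params minimal
      not_minimal_polygon_quadQ_if_liftable by metis
qed

theorem mainTheorem7:
  fixes h a b c d :: int
  assumes "h \<ge> 2"
    and "a \<in> {1..h-1}" and "b \<in> {1..h-1}" and "c \<in> {1..h-1}" and "d \<in> {1..h-1}"
  shows "ls_square (quadQ h a b c d) = of_int h
    \<and> (minimal_polygon (quadQ h a b c d) \<longleftrightarrow> condA h a b c d \<or> condB h a b c d)
    \<and> \<not> (condA h a b c d \<and> condB h a b c d)
    \<and> (condA h a b c d \<or> condB h a b c d \<longrightarrow>
        (\<exists>a' b' c' d'. a' \<in> {1..h-1} \<and> b' \<in> {1..h-1} \<and> c' \<in> {1..h-1} \<and> d' \<in> {1..h-1} \<and>
           lattice_equivalent (quadQ h a b c d) (quadQ h a' b' c' d') \<and>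
           (condA h a b c d \<longrightarrow> condB h a' b' c' d') \<and>
           (condB h a b c d \<longrightarrow> condA h a' b' c' d')))"
proof -
  note params = assms(2-5)
  have "minimal_polygon (quadQ h a b c d) \<longleftrightarrow> condA h a b c d \<or> condB h a b c d"
    using minimal_polygon_quadQ[OF params] not_minimal_polygon_quadQ[OF params] by blast
  moreover have "\<exists>a' b' c' d'. a' \<in> {1..h-1} \<and> b' \<in> {1..h-1} \<and> c' \<in> {1..h-1} \<and> d' \<in> {1..h-1} \<and>
      lattice_equivalent (quadQ h a b c d) (quadQ h a' b' c' d') \<and>
      (condA h a b c d \<longrightarrow> condB h a' b' c' d') \<and> (condB h a b c d \<longrightarrow> condA h a' b' c' d')"
    using params lattice_equivalent_quadQ_reflect[of h a b c d] condA_reflect[of h a b c d]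
      condB_reflect[of h a b c d]
    by (intro exI[of _ "h - d"] exI[of _ "h - b"] exI[of _ "h - c"] exI[of _ "h - a"]) auto
  ultimately show ?thesis
    using ls_square_quadQ[OF params] not_condA_and_condB by blast
qed

end
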